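(* Let $G$ be a finite, simple, connected graph with $\dim_{wt}(G)=2$ and let $\{u,v\}$ be a weak total metric basis of $G$. Then $u$ and $v$ each have degree at most two.
   Context: $d(x,y)$ is the shortest-path distance. A set $W\subseteq V(G)$ is a resolving set if for every two distinct vertices $y,z$ there is $x\in W$ with $d(y,x)\ne d(z,x)$. A set $W$ is a weak total resolving set (WTR-set) if $W$ is resolving and, for every $w\in W$ and every $x\in V(G)\setminus W$, there is $w'\in W\setminus\{w\}$ with $d(x,w')\ne d(w,w')$. $\dim_{wt}(G)$ is the minimum cardinality of a WTR-set, and a weak total metric basis is a WTR-set of that cardinality. *)

theory Defs
  imports Main
begin

definition simple_graph :: "'a set \<Rightarrow> ('a \<Rightarrow> 'a \<Rightarrow> bool) \<Rightarrow> bool" where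
  "simple_graph V E \<longleftrightarrow> finite V \<and> (\<forall>x y. E x y \<longrightarrow> x \<in> V \<and> y \<in> V)
     \<and> (\<forall>x y. E x y \<longrightarrow> E y x) \<and> (\<forall>x. \<not> E x x)"

definition connected_graph :: "'a set \<Rightarrow> ('a \<Rightarrow> 'a \<Rightarrow> bool) \<Rightarrow> bool" where
  "connected_graph V E \<longleftrightarrow> V \<noteq> {} \<and> (\<forall>x\<in>V. \<forall>y\<in>V. \<exists>n. (E ^^ n) x y)"

definition gdist :: "('a \<Rightarrow> 'a \<Rightarrow> bool) \<Rightarrow> 'a \<Rightarrow> 'a \<Rightarrow> nat" where
  "gdist E x y = (LEAST n. (E ^^ n) x y)"

definition degree :: "('a \<Rightarrow> 'a \<Rightarrow> bool) \<Rightarrow> 'a \<Rightarrow> nat" where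
  "degree E x = card {y. E x y}"

definition resolving_set :: "'a set \<Rightarrow> ('a \<Rightarrow> 'a \<Rightarrow> bool) \<Rightarrow> 'a set \<Rightarrow> bool" where
  "resolving_set V E W \<longleftrightarrow> W \<subseteq> V \<and>
     (\<forall>y\<in>V. \<forall>z\<in>V. y \<noteq> z \<longrightarrow> (\<exists>x\<in>W. gdist E y x \<noteq> gdist E z x))"

definition wtr_set :: "'a set \<Rightarrow> ('a \<Rightarrow> 'a \<Rightarrow> bool) \<Rightarrow> 'a set \<Rightarrow> bool" where
  "wtr_set V E W \<longleftrightarrow> resolving_set V E W \<and>
     (\<forall>w\<in>W. \<forall>x\<in>V - W. \<exists>w'\<in>W - {w}. gdist E x w' \<noteq> gdist E w w')"

text \<open>Minimum cardinality of a WTR-set (0 by convention if none exists).\<close>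
definition dim_wt :: "'a set \<Rightarrow> ('a \<Rightarrow> 'a \<Rightarrow> bool) \<Rightarrow> nat" where
  "dim_wt V E = Inf (card ` {W. wtr_set V E W})"

definition wt_metric_basis :: "'a set \<Rightarrow> ('a \<Rightarrow> 'a \<Rightarrow> bool) \<Rightarrow> 'a set \<Rightarrow> bool" where
  "wt_metric_basis V E W \<longleftrightarrow> wtr_set V E W \<and> card W = dim_wt V E"

end

theory Submission
  imports Defs
begin

text \<open>The neighbours of u are at distance 1 from u, and their distances to v differ from
  d(u,v) by at most one. The weak total condition forbids equality with d(u,v), so these
  distances lie in {d(u,v) - 1, d(u,v) + 1}; since {u,v} resolves the neighbours of u, which
  all agree on their distance to u, they must be told apart by their distance to v, leaving
  room for at most two of them.\<close>

lemma gdist_le: "(E ^^ n) x y \<Longrightarrow> gdist E x y \<le> n"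
  unfolding gdist_def by (rule Least_le)

lemma relpowp_gdist: "(E ^^ n) x y \<Longrightarrow> (E ^^ gdist E x y) x y"
  unfolding gdist_def by (rule LeastI)

lemma gdist_eq_0_iff:
  assumes "(E ^^ n) x y"
  shows "gdist E x y = 0 \<longleftrightarrow> x = y"
proof
  assume "gdist E x y = 0"
  then show "x = y" using relpowp_gdist[OF assms] by simp
next
  assume "x = y"
  then show "gdist E x y = 0" using gdist_le[where n = 0] by simp
qed

lemma gdist_edge_triangle:
  assumes "E x y" and "(E ^^ n) y z"
  shows "gdist E x z \<le> Suc (gdist E y z)"
  using assms by (meson gdist_le relpowp_Suc_I2 relpowp_gdist)

lemma connected_graph_relpowp_gdist:
  assumes "connected_graph V E" and "x \<in> V" and "y \<in> V"
  shows "(E ^^ gdist E x y) x y"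
  using assms unfolding connected_graph_def by (meson relpowp_gdist)

lemma simple_graph_gdist_edge:
  assumes "simple_graph V E" and "E x y"
  shows "gdist E x y = 1"
proof -
  have walk: "(E ^^ 1) x y" using assms(2) by auto
  have "x \<noteq> y" using assms unfolding simple_graph_def by auto
  then have "gdist E x y \<noteq> 0" using gdist_eq_0_iff[OF walk] by simp
  with gdist_le[OF walk] show ?thesis by simp
qed

lemma simple_graph_gdist_neighbour:
  assumes "simple_graph V E" and "connected_graph V E" and "E u y" and "v \<in> V"
  shows "gdist E u v \<le> Suc (gdist E y v)" and "gdist E y v \<le> Suc (gdist E u v)"
proof -
  have "u \<in> V" "y \<in> V" "E y u"
    using assms(1,3) unfolding simple_graph_def by auto
  then show "gdist E u v \<le> Suc (gdist E y v)" "gdist E y v \<le> Suc (gdist E u v)"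
    using assms connected_graph_relpowp_gdist gdist_edge_triangle by metis+
qed

lemma wtr_pair_gdist_neighbour_ne:
  assumes "simple_graph V E" and "connected_graph V E"
    and "wtr_set V E {u, v}" and "u \<noteq> v" and "E u y"
  shows "gdist E y v \<noteq> gdist E u v"
proof (cases "y = v")
  case True
  have "u \<in> V" "v \<in> V" using assms(3) unfolding wtr_set_def resolving_set_def by auto
  then have "gdist E u v \<noteq> 0"
    using assms(2,4) connected_graph_relpowp_gdist gdist_eq_0_iff by metis
  with True show ?thesis using gdist_eq_0_iff[where n = 0 and x = v and y = v] by simp
next
  case False
  have "y \<in> V" "y \<noteq> u" using assms(1,5) unfolding simple_graph_def by auto
  with False have "y \<in> V - {u, v}" by auto
  with assms(3) obtain w where "w \<in> {u, v} - {u}" "gdist E y w \<noteq> gdist E u w"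
    unfolding wtr_set_def by blast
  then show ?thesis by auto
qed

lemma wtr_pair_degree_le_2:
  assumes sg: "simple_graph V E" and cg: "connected_graph V E"
    and wt: "wtr_set V E {u, v}" and uv: "u \<noteq> v"
  shows "degree E u \<le> 2"
proof -
  define N where "N = {y. E u y}"
  define D where "D = gdist E u v"
  have res: "resolving_set V E {u, v}" using wt unfolding wtr_set_def by auto
  then have "v \<in> V" unfolding resolving_set_def by auto
  have N_sub: "N \<subseteq> V" using sg unfolding simple_graph_def N_def by auto
  have dist_v: "gdist E y v \<in> {D - 1, D + 1}" if "y \<in> N" for y
    using simple_graph_gdist_neighbour[OF sg cg _ \<open>v \<in> V\<close>, where y = y]
      wtr_pair_gdist_neighbour_ne[OF sg cg wt uv, where y = y] that
    unfolding N_def D_def by force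
  have "inj_on (\<lambda>y. gdist E y v) N"
  proof (rule inj_onI, rule ccontr)
    fix y z assume y: "y \<in> N" and z: "z \<in> N" and eq: "gdist E y v = gdist E z v"
      and "y \<noteq> z"
    with res N_sub obtain x where "x \<in> {u, v}" "gdist E y x \<noteq> gdist E z x"
      unfolding resolving_set_def by blast
    moreover have "E y u" "E z u" using y z sg unfolding simple_graph_def N_def by auto
    then have "gdist E y u = gdist E z u" by (simp add: simple_graph_gdist_edge[OF sg])
    ultimately show False using eq by blast
  qed
  then have "card N = card ((\<lambda>y. gdist E y v) ` N)" by (simp add: card_image)
  also have "\<dots> \<le> card {D - 1, D + 1}" using dist_v by (intro card_mono) auto
  also have "\<dots> \<le> 2" by (simp add: card_insert_if)
  finally show ?thesis unfolding degree_def N_def .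
qed

theorem theorem1:
  fixes V :: "'a set" and E :: "'a \<Rightarrow> 'a \<Rightarrow> bool" and u v :: 'a
  assumes "simple_graph V E" and "connected_graph V E"
    and "dim_wt V E = 2"
    and "wt_metric_basis V E {u, v}"
  shows "degree E u \<le> 2 \<and> degree E v \<le> 2"
proof -
  have wt: "wtr_set V E {u, v}" and "card {u, v} = 2"
    using assms(4) unfolding wt_metric_basis_def by (auto simp: assms(3))
  then have "u \<noteq> v" by (auto simp: card_insert_if split: if_splits)
  moreover have "wtr_set V E {v, u}" using wt by (simp add: insert_commute)
  ultimately show ?thesis using wtr_pair_degree_le_2[OF assms(1,2)] wt by auto
qed

end
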